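(* Let $m$ be a positive integer, $x$ a positive integer and $r\in\{0,\dots,m-1\}$. Define $y_0=(m+1)x+r$ and $y_n=\left\lfloor \frac{(m+1)y_{n-1}}{m}\right\rfloor$ for $n\ge1$. Then for every integer $n\ge 0$, $\left\lfloor \frac{y_n}{m+1}\right\rfloor = x_n(x,r)$ and $y_n\equiv r_n(x,r)\pmod{m+1}$; that is, $x_n(x,r)$ and $r_n(x,r)$ are the quotient and remainder of $y_n$ upon division by $m+1$.
   Context: Fix a positive integer $m$. The triangle $T_m$ is an array whose row $x$ ($x=1,2,\dots$) has $x$ entries, in columns $0,\dots,x-1$. Row $1$ is the single entry $1$. For $x>1$, row $x$ is obtained from row $x-1$ by rotating it cyclically left by $m$ positions (the entry in column $c$ of row $x-1$ moves to column $(c-m)\bmod(x-1)\in\{0,\dots,x-2\}$ of row $x$), then appending in column $x-1$ a new entry equal to $1$ plus the entry in column $0$ of row $x-1$. Entries are individual objects keeping their identity as they move. Tracking: for a positive integer $x$ and $r\in\{0,\dots,m-1\}$, follow the individual entry in row $x$, column $r\bmod x$. Let $(x_0,r_0),(x_1,r_1),\dots$ be the list, in strictly increasing lexicographic order, of all integer pairs $(y,c)$ with $y\ge x$, $0\le c\le m-1$, $(y,c)\ge (x,r)$ lexicographically, such that the tracked entry occupies column $c\bmod y$ of row $y$ (so $x_0=x$, $r_0=r$). Write $x_n(x,r)=x_n$, $r_n(x,r)=r_n$. *)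

theory Defs
  imports Main "HOL-Library.Product_Lexorder" "HOL-Library.Infinite_Set"
begin

text \<open>Column (in row x + k) of the entry of T_m that sits in row x, column r mod x.
  Passing from row y to row y+1 the entry in column c moves to column (c - m) mod y;
  entries are never deleted, so the tracked entry lives in every later row.\<close>
fun track_col :: "nat \<Rightarrow> nat \<Rightarrow> nat \<Rightarrow> nat \<Rightarrow> int" where
  "track_col m x r 0 = int (r mod x)"
| "track_col m x r (Suc k) = (track_col m x r k - int m) mod int (x + k)"

definition track_set :: "nat \<Rightarrow> nat \<Rightarrow> nat \<Rightarrow> (nat \<times> nat) set" where
  "track_set m x r = {(y, c). x \<le> y \<and> c < m \<and> (x, r) \<le> (y, c) \<and>
      track_col m x r (y - x) = int (c mod y)}"

definition track_pair :: "nat \<Rightarrow> nat \<Rightarrow> nat \<Rightarrow> nat \<Rightarrow> nat \<times> nat" where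
  "track_pair m x r n = enumerate (track_set m x r) n"

definition xn :: "nat \<Rightarrow> nat \<Rightarrow> nat \<Rightarrow> nat \<Rightarrow> nat" where
  "xn m x r n = fst (track_pair m x r n)"

definition rn :: "nat \<Rightarrow> nat \<Rightarrow> nat \<Rightarrow> nat \<Rightarrow> nat" where
  "rn m x r n = snd (track_pair m x r n)"

fun yseq :: "nat \<Rightarrow> nat \<Rightarrow> nat \<Rightarrow> nat \<Rightarrow> nat" where
  "yseq m x r 0 = (m + 1) * x + r"
| "yseq m x r (Suc n) = ((m + 1) * yseq m x r n) div m"

end

theory Submission
  imports Defs
begin

text \<open>
  Whenever the tracked entry is in row q, column s mod q with s < m, the next such position is
  found as follows.  If q + s < m it is column q + s of the same row.  Otherwise the entry
  slides left by exactly m columns per row (wrapping around only in the first step), and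
  writing q + s = t m + u with u < m, the first row where its column drops below m is q + t,
  where the column is u.  Coding the pair (q, s) as (m + 1) q + s turns lexicographic order
  into the order of the naturals and this step into
  z \<mapsto> z + q + \<lfloor>(q + s) / m\<rfloor> = \<lfloor>(m + 1) z / m\<rfloor>,
  the recursion defining y_n.
\<close>

lemma range_eq_if_no_gaps:
  fixes f :: "nat \<Rightarrow> 'a::linorder"
  assumes mono: "strict_mono f" and in_S: "\<And>n. f n \<in> S"
    and no_gap: "\<And>n s. s \<in> S \<Longrightarrow> f n < s \<Longrightarrow> f (Suc n) \<le> s"
    and unbounded: "\<And>s. s \<in> S \<Longrightarrow> \<exists>n. s < f n"
  shows "range f = {s \<in> S. f 0 \<le> s}"
proof (intro antisym subsetI)
  fix s
  assume "s \<in> range f"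
  then show "s \<in> {s \<in> S. f 0 \<le> s}" using in_S mono by (auto simp: strict_mono_less_eq)
next
  fix s
  assume s: "s \<in> {s \<in> S. f 0 \<le> s}"
  define N where "N = (LEAST n. s < f n)"
  have "s < f N" unfolding N_def using unbounded s by (auto intro: LeastI_ex)
  then obtain n where n: "N = Suc n" using s by (cases N) auto
  then have "f n \<le> s" using not_less_Least[of n "\<lambda>n. s < f n"] by (simp add: N_def)
  moreover have "\<not> f n < s" using no_gap[of s n] s \<open>s < f N\<close> n by auto
  ultimately show "s \<in> range f" by (metis order_less_le rangeI)
qed

lemma enumerate_range_strict_mono:
  fixes f :: "nat \<Rightarrow> 'a::wellorder"
  assumes "strict_mono f"
  shows "enumerate (range f) n = f n"
proof -
  have inf: "infinite (range f)"
    using assms by (metis finite_imageD infinite_UNIV_nat strict_mono_imp_inj_on)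
  show ?thesis
  proof (induction n)
    case 0
    show ?case
      using assms by (auto simp: enumerate_0 strict_mono_less_eq intro!: Least_equality)
  next
    case (Suc n)
    show ?case
      using assms unfolding enumerate_Suc''[OF inf] Suc
      by (auto simp: strict_mono_less strict_mono_less_eq intro!: Least_equality)
  qed
qed

fun tracked :: "nat \<Rightarrow> nat \<Rightarrow> nat \<Rightarrow> nat \<times> nat \<Rightarrow> bool" where
  "tracked m x r (y, c) \<longleftrightarrow> x \<le> y \<and> c < m \<and> track_col m x r (y - x) = int (c mod y)"

lemma track_col_slide:
  assumes tr: "tracked m x r (q, s)" and k: "0 < k" "k * m \<le> q + s"
  shows "track_col m x r (q + k - x) = int (q + s - k * m)"
  using k
proof (induction k rule: nat_induct_non_zero)
  case 1
  have s: "s < m" and col: "track_col m x r (q - x) = int (s mod q)" and xq: "x \<le> q"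
    using tr by auto
  have "track_col m x r (q + 1 - x) = (int (s mod q) - int m) mod int q"
    using col xq by (simp add: Suc_diff_le)
  also have "\<dots> = (int q + int s - int m) mod int q"
    by (metis add.commute add_diff_eq mod_add_self2 mod_diff_left_eq of_nat_mod)
  also have "\<dots> = int q + int s - int m"
    using 1 s by (intro mod_pos_pos_trivial) auto
  finally show ?case using 1 by simp
next
  case (Suc k)
  have "x \<le> q" "s < m" using tr by auto
  then have "track_col m x r (q + Suc k - x) = (int (q + s - k * m) - int m) mod int (q + k)"
    using Suc by (simp add: Suc_diff_le)
  also have "\<dots> = int (q + s - k * m) - int m"
  proof (intro mod_pos_pos_trivial)
    have "m \<le> k * m" using \<open>0 < k\<close> by simp
    then have "m \<le> q + s - k * m" "q + s - k * m < q + k + m"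
      using Suc.prems \<open>s < m\<close> by auto
    then show "0 \<le> int (q + s - k * m) - int m" "int (q + s - k * m) - int m < int (q + k)"
      by linarith+
  qed
  finally show ?case using Suc.prems by simp
qed

fun next_hit :: "nat \<Rightarrow> nat \<times> nat \<Rightarrow> nat \<times> nat" where
  "next_hit m (q, s) =
     (if q + s < m then (q, q + s) else (q + (q + s) div m, (q + s) mod m))"

lemma tracked_next_hit:
  assumes "tracked m x r (q, s)"
  shows "tracked m x r (next_hit m (q, s))"
proof (cases "q + s < m")
  case True
  then show ?thesis using assms by simp
next
  case False
  define t u where "t = (q + s) div m" and "u = (q + s) mod m"
  have "s < m" "x \<le> q" using assms by auto
  have qs: "q + s = t * m + u" by (simp add: t_def u_def)
  have "0 < t" "u < m"
    using False \<open>s < m\<close> by (simp_all add: t_def u_def div_greater_zero_iff)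
  then have "m \<le> t * m" by simp
  then have "u < q" using qs \<open>s < m\<close> by linarith
  moreover have "track_col m x r (q + t - x) = int u"
    using track_col_slide[OF assms \<open>0 < t\<close>] qs by simp
  ultimately show ?thesis
    using \<open>x \<le> q\<close> \<open>u < m\<close> False by (simp add: t_def u_def)
qed

lemma tracked_same_row_gap:
  assumes "0 < x" "tracked m x r (q, s)" "tracked m x r (q, c)" "s < c"
  shows "s + q \<le> c"
proof -
  have "0 < q" "c mod q = s mod q" using assms by auto
  then have "q dvd c - s" using \<open>s < c\<close> by (simp add: mod_eq_dvd_iff_nat)
  then have "q \<le> c - s" using \<open>s < c\<close> by (simp add: dvd_imp_le)
  then show ?thesis using \<open>s < c\<close> by linarith
qed

lemma next_hit_le_tracked:
  assumes x: "0 < x" and qs: "tracked m x r (q, s)" and yc: "tracked m x r (y, c)"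
    and less: "(q, s) < (y, c)"
  shows "next_hit m (q, s) \<le> (y, c)"
proof (rule ccontr)
  assume "\<not> next_hit m (q, s) \<le> (y, c)"
  then have before: "(y, c) < next_hit m (q, s)" by simp
  have "s < m" "c < m" using qs yc by auto
  show False
  proof (cases "q + s < m")
    case True
    then have "y = q" "s < c" "c < s + q" using less before by (auto simp: less_prod_def)
    then show False using tracked_same_row_gap[OF x qs] yc by fastforce
  next
    case False
    define t u where "t = (q + s) div m" and "u = (q + s) mod m"
    have split: "q + s = t * m + u" by (simp add: t_def u_def)
    have "q < y \<or> y = q \<and> s < c" using less by (auto simp: less_prod_def)
    moreover have "y < q + t \<or> y = q + t \<and> c < u"
      using before False by (auto simp: less_prod_def t_def u_def)
    ultimately consider (same_row) "y = q" "s < c"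
      | (later_row) "q < y" "y < q + t \<or> y = q + t \<and> c < u"
      by blast
    then show False
    proof cases
      case same_row
      then show False using tracked_same_row_gap[OF x qs] yc False \<open>c < m\<close> by fastforce
    next
      case later_row
      define k where "k = y - q"
      have "0 < k" "k \<le> t" "y = q + k" using later_row by (auto simp: k_def)
      have c_less: "c < q + s - k * m"
      proof (cases "k < t")
        case True
        then have "k * m + m \<le> t * m" by (metis add.commute mult_Suc mult_le_mono1 Suc_leI)
        then show ?thesis using split \<open>c < m\<close> by linarith
      next
        case False
        then show ?thesis using later_row(2) \<open>k \<le> t\<close> \<open>y = q + k\<close> split by auto
      qed
      have "k * m \<le> q + s" using \<open>k \<le> t\<close> split by (metis le_add1 le_trans mult_le_mono1)
      then have "track_col m x r (y - x) = int (q + s - k * m)"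
        using track_col_slide[OF qs \<open>0 < k\<close>] \<open>y = q + k\<close> by simp
      then have "c mod y = q + s - k * m" using yc by simp
      then show False using c_less mod_less_eq_dividend[of c y] by linarith
    qed
  qed
qed

fun pair_code :: "nat \<Rightarrow> nat \<times> nat \<Rightarrow> nat" where
  "pair_code m (q, s) = (m + 1) * q + s"

lemma pair_code_div_mod:
  assumes "s \<le> m"
  shows "pair_code m (q, s) div (m + 1) = q" "pair_code m (q, s) mod (m + 1) = s"
proof -
  have "s < m + 1" using assms by simp
  then show "pair_code m (q, s) div (m + 1) = q" "pair_code m (q, s) mod (m + 1) = s"
    by (simp_all only: pair_code.simps div_mult_self4 mod_mult_self4) simp_all
qed

lemma pair_code_less_iff:
  assumes "s \<le> m" "c \<le> m"
  shows "(q, s) < (y, c) \<longleftrightarrow> pair_code m (q, s) < pair_code m (y, c)"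
proof -
  have digit_carry: "(m + 1) * a + b < (m + 1) * a' + b'" if "a < a'" "b \<le> m" for a a' b b' :: nat
  proof -
    have "(m + 1) * (a + 1) \<le> (m + 1) * a'" using \<open>a < a'\<close> by (intro mult_le_mono2) simp
    then show ?thesis using \<open>b \<le> m\<close> by (simp add: algebra_simps)
  qed
  show ?thesis
  proof (cases q y rule: linorder_cases)
    case less
    then show ?thesis using digit_carry[of q y s c] assms by (simp add: less_prod_def)
  next
    case equal
    then show ?thesis by (simp add: less_prod_def)
  next
    case greater
    then show ?thesis using digit_carry[of y q c s] assms by (auto simp: less_prod_def)
  qed
qed

lemma pair_code_next_hit:
  assumes "s < m"
  shows "pair_code m (next_hit m (q, s)) = (m + 1) * pair_code m (q, s) div m"
proof -
  define z where "z = pair_code m (q, s)"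
  have "(m + 1) * z div m = ((q + s) + (z + q) * m) div m"
    by (simp add: z_def algebra_simps)
  also have "\<dots> = z + q + (q + s) div m"
    using assms by simp
  finally have "(m + 1) * z div m = z + q + (q + s) div m" .
  moreover have "pair_code m (next_hit m (q, s)) = pair_code m (q, s) + q + (q + s) div m"
    using div_mult_mod_eq[of "q + s" m] by (auto simp: algebra_simps)
  ultimately show ?thesis by (simp add: z_def)
qed

lemma less_next_hit: "0 < q \<Longrightarrow> (q, s) < next_hit m (q, s)"
  by (cases "m = 0") (auto simp: less_prod_def div_greater_zero_iff)

definition hit :: "nat \<Rightarrow> nat \<Rightarrow> nat \<Rightarrow> nat \<Rightarrow> nat \<times> nat" where
  "hit m x r n = (next_hit m ^^ n) (x, r)"

lemma hit_0 [simp]: "hit m x r 0 = (x, r)"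
  by (simp add: hit_def)

lemma hit_Suc [simp]: "hit m x r (Suc n) = next_hit m (hit m x r n)"
  by (simp add: hit_def)

lemma tracked_hit:
  assumes "0 < x" "r < m"
  shows "tracked m x r (hit m x r n)"
proof (induction n)
  case 0
  then show ?case using assms by simp
next
  case (Suc n)
  then show ?case using tracked_next_hit by (metis hit_Suc surj_pair)
qed

lemma strict_mono_hit:
  assumes "0 < x" "r < m"
  shows "strict_mono (hit m x r)"
proof (rule strict_mono_Suc_iff [THEN iffD2], intro allI)
  fix n
  obtain q s where qs: "hit m x r n = (q, s)" by fastforce
  then have "0 < q" using tracked_hit[OF assms, of n] assms by auto
  then show "hit m x r n < hit m x r (Suc n)" using qs less_next_hit by simp
qed

lemma yseq_eq_pair_code_hit:
  assumes "0 < x" "r < m"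
  shows "yseq m x r n = pair_code m (hit m x r n)"
proof (induction n)
  case 0
  then show ?case by simp
next
  case (Suc n)
  obtain q s where qs: "hit m x r n = (q, s)" by fastforce
  then have "s < m" using tracked_hit[OF assms, of n] by simp
  then show ?case using Suc qs pair_code_next_hit by simp
qed

lemma le_pair_code_hit:
  assumes "0 < x" "r < m"
  shows "n \<le> pair_code m (hit m x r n)"
proof -
  have "strict_mono (pair_code m \<circ> hit m x r)"
  proof (rule strict_monoI)
    fix i j :: nat
    assume "i < j"
    obtain q s q' s' where "hit m x r i = (q, s)" "hit m x r j = (q', s')" by fastforce
    moreover have "hit m x r i < hit m x r j"
      using \<open>i < j\<close> strict_mono_hit[OF assms] by (simp add: strict_mono_less)
    moreover have "s < m" "s' < m"
      using calculation(1,2) tracked_hit[OF assms, of i] tracked_hit[OF assms, of j] by auto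
    ultimately show "(pair_code m \<circ> hit m x r) i < (pair_code m \<circ> hit m x r) j"
      using pair_code_less_iff[of s m s' q q'] by simp
  qed
  then show ?thesis by (metis comp_apply strict_mono_imp_increasing)
qed

lemma tracked_less_hit:
  assumes "0 < x" "r < m" "tracked m x r (y, c)"
  shows "\<exists>n. (y, c) < hit m x r n"
proof
  define n where "n = Suc (pair_code m (y, c))"
  obtain q s where qs: "hit m x r n = (q, s)" by fastforce
  have "pair_code m (y, c) < pair_code m (q, s)"
    using le_pair_code_hit[OF assms(1,2), of n] qs by (simp add: n_def)
  moreover have "s < m" "c < m" using tracked_hit[OF assms(1,2), of n] qs assms(3) by auto
  ultimately have "(y, c) < (q, s)" using pair_code_less_iff[of c m s y q] by simp
  then show "(y, c) < hit m x r n" using qs by simp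
qed

lemma track_set_eq_range_hit:
  assumes "0 < x" "r < m"
  shows "track_set m x r = range (hit m x r)"
proof -
  have "range (hit m x r) = {p \<in> Collect (tracked m x r). hit m x r 0 \<le> p}"
  proof (rule range_eq_if_no_gaps)
    show "strict_mono (hit m x r)" using strict_mono_hit[OF assms] .
    show "hit m x r n \<in> Collect (tracked m x r)" for n using tracked_hit[OF assms] by simp
    show "hit m x r (Suc n) \<le> p" if "p \<in> Collect (tracked m x r)" "hit m x r n < p" for n p
      using that tracked_hit[OF assms, of n] next_hit_le_tracked[OF assms(1)]
      by (metis hit_Suc mem_Collect_eq surj_pair)
    show "\<exists>n. p < hit m x r n" if "p \<in> Collect (tracked m x r)" for p
      using that tracked_less_hit[OF assms] by (metis mem_Collect_eq surj_pair)
  qed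
  then show ?thesis by (auto simp: track_set_def)
qed

theorem mainTheorem5:
  fixes m x r n :: nat
  assumes "0 < m" and "0 < x" and "r < m"
  shows "yseq m x r n div (m + 1) = xn m x r n \<and> yseq m x r n mod (m + 1) = rn m x r n"
proof -
  have "track_pair m x r n = hit m x r n"
    unfolding track_pair_def track_set_eq_range_hit[OF assms(2,3)]
    using strict_mono_hit[OF assms(2,3)] by (rule enumerate_range_strict_mono)
  moreover obtain q s where qs: "hit m x r n = (q, s)" by fastforce
  moreover have "s < m" using tracked_hit[OF assms(2,3), of n] qs by simp
  ultimately show ?thesis
    using yseq_eq_pair_code_hit[OF assms(2,3), of n] pair_code_div_mod[of s m q]
    by (simp add: xn_def rn_def)
qed

end
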